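(* Let $C$ be a completely transitive code in $H(m,2)$ with $\mathbf 0\in C$ and minimum distance $\delta\in\{5,6\}$. Then the set of all codewords of weight $\delta$ forms the block set of a $t$-$(m,\delta,\lambda)$ design, where either 1. $\delta=5$, $t=2$ and $\lambda\le (m-2)/3$; or 2. $\delta=6$, $t=3$ and $\lambda\le (m-3)/3$.
   Context: $H(m,2)$: vertex set $\mathbb F_2^m$ with coordinates indexed by a set $M$ of size $m$; vertices are identified with their supports (subsets of $M$), and the weight of a vertex is the size of its support. For a code $C$: covering radius $\rho=\max_\alpha d(\alpha,C)$, $C_i=\{\alpha:d(\alpha,C)=i\}$. $\mathrm{Aut}(C)$ is the setwise stabiliser of $C$ in the automorphism group of $H(m,2)$ (translations together with coordinate permutations); $C$ is completely transitive if $\mathrm{Aut}(C)$ is transitive on each of $C,C_1,\dots,C_\rho$. A $t$-$(m,k,\lambda)$ design is a collection of $k$-subsets (blocks) of an $m$-set such that every $t$-subset lies in exactly $\lambda$ blocks. *)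

theory Defs
  imports Complex_Main "HOL-Combinatorics.Permutations"
begin

text \<open>The Hamming graph H(m,2) with coordinate set M (card M = m): vertices are
  subsets of M (supports), weight = card, distance = size of symmetric difference.\<close>

definition hdist :: "'a set \<Rightarrow> 'a set \<Rightarrow> nat" where
  "hdist x y = card ((x - y) \<union> (y - x))"

definition symdiff :: "'a set \<Rightarrow> 'a set \<Rightarrow> 'a set" where
  "symdiff x y = (x - y) \<union> (y - x)"

definition hamming_aut :: "'a set \<Rightarrow> ('a set \<Rightarrow> 'a set) set" where
  "hamming_aut M = {f. \<exists>a \<sigma>. a \<subseteq> M \<and> \<sigma> permutes M \<and> f = (\<lambda>x. symdiff (\<sigma> ` x) a)}"

definition code_aut :: "'a set \<Rightarrow> 'a set set \<Rightarrow> ('a set \<Rightarrow> 'a set) set" where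
  "code_aut M C = {g \<in> hamming_aut M. g ` C = C}"

definition dist_to_code :: "'a set set \<Rightarrow> 'a set \<Rightarrow> nat" where
  "dist_to_code C x = Min (hdist x ` C)"

definition covering_radius :: "'a set \<Rightarrow> 'a set set \<Rightarrow> nat" where
  "covering_radius M C = Max (dist_to_code C ` Pow M)"

definition code_layer :: "'a set \<Rightarrow> 'a set set \<Rightarrow> nat \<Rightarrow> 'a set set" where
  "code_layer M C i = {x \<in> Pow M. dist_to_code C x = i}"

definition completely_transitive :: "'a set \<Rightarrow> 'a set set \<Rightarrow> bool" where
  "completely_transitive M C \<longleftrightarrow>
     (\<forall>i \<le> covering_radius M C. \<forall>x \<in> code_layer M C i. \<forall>y \<in> code_layer M C i.
        \<exists>g \<in> code_aut M C. g x = y)"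

definition has_min_distance :: "'a set set \<Rightarrow> nat \<Rightarrow> bool" where
  "has_min_distance C d \<longleftrightarrow>
     (\<exists>x\<in>C. \<exists>y\<in>C. x \<noteq> y \<and> hdist x y = d) \<and>
     (\<forall>x\<in>C. \<forall>y\<in>C. x \<noteq> y \<longrightarrow> d \<le> hdist x y)"

definition is_design :: "'a set \<Rightarrow> nat \<Rightarrow> nat \<Rightarrow> nat \<Rightarrow> 'a set set \<Rightarrow> bool" where
  "is_design M t k lam B \<longleftrightarrow>
     (\<forall>b\<in>B. b \<subseteq> M \<and> card b = k) \<and>
     (\<forall>T. T \<subseteq> M \<and> card T = t \<longrightarrow> card {b \<in> B. T \<subseteq> b} = lam)"

end

theory Submission
  imports Defs
begin

text \<open>Let \<open>2t \<le> \<delta> \<le> 2t + 1\<close>. Since every nonzero codeword has weight at least \<delta>, a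
  \<open>t\<close>-set \<open>T\<close> lies at distance exactly \<open>t\<close> from \<open>C\<close>, so all \<open>t\<close>-sets belong to the single
  orbit \<open>C\<^sub>t\<close> of \<open>Aut(C)\<close>. The codewords at distance \<open>\<delta> - t\<close> from \<open>T\<close> are the weight-\<open>\<delta>\<close>
  codewords through \<open>T\<close>, together with \<open>0\<close> when \<open>\<delta> = 2t\<close>; their number is
  \<open>Aut(C)\<close>-invariant, hence the same for all \<open>T\<close>, which gives the design. Two blocks
  through \<open>T\<close> are at distance at least \<open>\<delta>\<close>, so they meet exactly in \<open>T\<close>: the sets \<open>b - T\<close>
  are disjoint \<open>(\<delta> - t)\<close>-subsets of \<open>M - T\<close>, whence \<open>(\<delta> - t) \<lambda> \<le> m - t\<close>.\<close>

lemma hdist_eq_card_symdiff: "hdist x y = card (symdiff x y)"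
  unfolding hdist_def symdiff_def ..

lemma hdist_empty_left [simp]: "hdist {} x = card x"
  unfolding hdist_def by simp

lemma hdist_empty_right [simp]: "hdist x {} = card x"
  unfolding hdist_def by simp

lemma hdist_eq_card_Int:
  assumes "finite x" "finite y"
  shows "hdist x y = card x + card y - 2 * card (x \<inter> y)"
proof -
  have "hdist x y = card (x - y) + card (y - x)"
    unfolding hdist_def using assms by (simp add: card_Un_disjoint disjoint_iff)
  moreover have "card (x \<inter> y) \<le> card x" "card (x \<inter> y) \<le> card y"
    using assms by (simp_all add: card_mono)
  ultimately show ?thesis
    using assms by (simp add: card_Diff_subset_Int Int_commute)
qed

lemma symdiff_translate: "symdiff (symdiff x a) (symdiff y a) = symdiff x y"
  unfolding symdiff_def by blast

lemma image_symdiff: "inj f \<Longrightarrow> f ` symdiff x y = symdiff (f ` x) (f ` y)"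
  unfolding symdiff_def by (simp add: image_Un image_set_diff)

lemma hamming_autE:
  assumes "g \<in> hamming_aut M"
  obtains \<sigma> where "inj \<sigma>" and "\<And>x y. symdiff (g x) (g y) = \<sigma> ` symdiff x y"
proof -
  obtain a \<sigma> where \<sigma>: "\<sigma> permutes M" and g: "g = (\<lambda>x. symdiff (\<sigma> ` x) a)"
    using assms unfolding hamming_aut_def by blast
  have "inj \<sigma>" using \<sigma> by (rule permutes_inj)
  moreover have "symdiff (g x) (g y) = \<sigma> ` symdiff x y" for x y
    using \<open>inj \<sigma>\<close> by (simp add: g symdiff_translate image_symdiff)
  ultimately show thesis using that by blast
qed

lemma hdist_hamming_aut:
  assumes "g \<in> hamming_aut M"
  shows "hdist (g x) (g y) = hdist x y"
proof -
  obtain \<sigma> where "inj \<sigma>" and g: "\<And>x y. symdiff (g x) (g y) = \<sigma> ` symdiff x y"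
    using hamming_autE[OF assms] by blast
  have "card (\<sigma> ` symdiff x y) = card (symdiff x y)"
    using \<open>inj \<sigma>\<close> by (rule card_image[OF inj_on_subset, OF _ subset_UNIV])
  then show ?thesis
    unfolding hdist_eq_card_symdiff g .
qed

lemma inj_hamming_aut:
  assumes "g \<in> hamming_aut M"
  shows "inj g"
proof (rule injI)
  fix x y assume "g x = g y"
  obtain \<sigma> where g: "\<And>x y. symdiff (g x) (g y) = \<sigma> ` symdiff x y"
    using hamming_autE[OF assms] by metis
  have "\<sigma> ` symdiff x y = symdiff (g y) (g y)"
    unfolding g[symmetric] \<open>g x = g y\<close> ..
  then have "symdiff x y = {}"
    unfolding symdiff_def by simp
  then show "x = y" unfolding symdiff_def by blast
qed

lemma card_sphere_code_aut:
  assumes "g \<in> code_aut M C"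
  shows "card {c \<in> C. hdist (g x) c = d} = card {c \<in> C. hdist x c = d}"
proof -
  have g: "g \<in> hamming_aut M" "g ` C = C"
    using assms unfolding code_aut_def by auto
  have "{c \<in> C. hdist (g x) c = d} = g ` {c \<in> C. hdist x c = d}"
  proof (intro equalityI subsetI)
    fix c assume c: "c \<in> {c \<in> C. hdist (g x) c = d}"
    then obtain c' where "c' \<in> C" "c = g c'" using g(2) by blast
    then show "c \<in> g ` {c \<in> C. hdist x c = d}"
      using c g(1) by (auto simp: hdist_hamming_aut)
  qed (use g in \<open>auto simp: hdist_hamming_aut\<close>)
  then show ?thesis
    using inj_hamming_aut[OF g(1)] by (simp add: card_image inj_on_subset)
qed

lemma completely_transitiveD:
  assumes "completely_transitive M C" "finite M"
    and "x \<in> code_layer M C i" "y \<in> code_layer M C i"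
  obtains g where "g \<in> code_aut M C" and "g x = y"
proof -
  have "i \<in> dist_to_code C ` Pow M"
    using assms(3) unfolding code_layer_def by auto
  then have "i \<le> covering_radius M C"
    unfolding covering_radius_def using \<open>finite M\<close> by simp
  then show thesis
    using assms that unfolding completely_transitive_def by blast
qed

locale code_with_zero =
  fixes M :: "'a set" and C :: "'a set set" and \<delta> :: nat
  assumes finite_M: "finite M"
    and code_subset: "C \<subseteq> Pow M"
    and zero_in_code: "{} \<in> C"
    and min_distance: "has_min_distance C \<delta>"
begin

lemma finite_vertex: "x \<subseteq> M \<Longrightarrow> finite x"
  by (rule finite_subset[OF _ finite_M])

lemma finite_code: "finite C"
  using code_subset finite_M by (meson finite_Pow_iff finite_subset)

lemma finite_codeword: "c \<in> C \<Longrightarrow> finite c"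
  using code_subset finite_vertex by blast

lemma min_distance_le_hdist: "x \<in> C \<Longrightarrow> y \<in> C \<Longrightarrow> x \<noteq> y \<Longrightarrow> \<delta> \<le> hdist x y"
  using min_distance unfolding has_min_distance_def by blast

lemma min_distance_pos: "0 < \<delta>"
proof -
  obtain x y where "x \<in> C" "y \<in> C" "x \<noteq> y" "hdist x y = \<delta>"
    using min_distance unfolding has_min_distance_def by blast
  then show ?thesis
    using finite_codeword unfolding hdist_def by auto
qed

lemma min_distance_le_card: "\<delta> \<le> card M"
proof -
  obtain x y where "x \<in> C" "y \<in> C" "hdist x y = \<delta>"
    using min_distance unfolding has_min_distance_def by blast
  moreover have "symdiff x y \<subseteq> M" if "x \<in> C" "y \<in> C" for x y
    using that code_subset unfolding symdiff_def by blast
  ultimately show ?thesis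
    using finite_M by (metis card_mono hdist_eq_card_symdiff)
qed

lemma min_distance_le_weight: "c \<in> C \<Longrightarrow> c \<noteq> {} \<Longrightarrow> \<delta> \<le> card c"
  using min_distance_le_hdist[OF zero_in_code] by fastforce

lemma hdist_codeword_ge:
  assumes "c \<in> C" "c \<noteq> {}" "finite T"
  shows "\<delta> - card T \<le> hdist T c"
proof -
  have "card (T \<inter> c) \<le> card T"
    using \<open>finite T\<close> by (simp add: card_mono)
  then show ?thesis
    using hdist_eq_card_Int[OF \<open>finite T\<close> finite_codeword[OF \<open>c \<in> C\<close>]]
      min_distance_le_weight[OF assms(1,2)] by linarith
qed

lemma dist_to_code_small_set:
  assumes "T \<subseteq> M" "2 * card T \<le> \<delta>"
  shows "dist_to_code C T = card T"
  unfolding dist_to_code_def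
proof (rule Min_eqI)
  show "finite (hdist T ` C)" using finite_code by simp
  show "card T \<in> hdist T ` C" using zero_in_code by force
  show "card T \<le> d" if "d \<in> hdist T ` C" for d
    using that hdist_codeword_ge finite_vertex[OF assms(1)] assms(2) by fastforce
qed

lemma small_set_in_code_layer:
  assumes "T \<subseteq> M" "2 * card T \<le> \<delta>"
  shows "T \<in> code_layer M C (card T)"
  using assms dist_to_code_small_set unfolding code_layer_def by simp

lemma blocks_through_eq_sphere:
  assumes "T \<subseteq> M" "2 * card T \<le> \<delta>"
  shows "{b \<in> C. card b = \<delta> \<and> T \<subseteq> b} = {c \<in> C. hdist T c = \<delta> - card T} - {{}}"
proof (intro equalityI subsetI)
  have "finite T" using finite_vertex[OF assms(1)] .
  fix c
  assume "c \<in> {b \<in> C. card b = \<delta> \<and> T \<subseteq> b}"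
  then show "c \<in> {c \<in> C. hdist T c = \<delta> - card T} - {{}}"
    using min_distance_pos hdist_eq_card_Int[OF \<open>finite T\<close> finite_codeword]
    by (auto simp: Int_absorb2)
next
  have "finite T" using finite_vertex[OF assms(1)] .
  fix c
  assume c: "c \<in> {c \<in> C. hdist T c = \<delta> - card T} - {{}}"
  then have "finite c" "\<delta> \<le> card c" "card (T \<inter> c) \<le> card T"
    using finite_codeword min_distance_le_weight \<open>finite T\<close> by (auto intro: card_mono)
  moreover have "hdist T c = card T + card c - 2 * card (T \<inter> c)"
    using hdist_eq_card_Int[OF \<open>finite T\<close> \<open>finite c\<close>] .
  ultimately have "card c = \<delta>" "card (T \<inter> c) = card T"
    using c assms(2) by auto
  then have "T \<subseteq> c"
    using \<open>finite T\<close> by (metis Int_lower1 card_subset_eq inf.absorb_iff1)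
  then show "c \<in> {b \<in> C. card b = \<delta> \<and> T \<subseteq> b}"
    using c \<open>card c = \<delta>\<close> by auto
qed

lemma card_blocks_through_invariant:
  assumes "completely_transitive M C" "T \<subseteq> M" "T' \<subseteq> M" "card T' = card T"
    and "2 * card T \<le> \<delta>"
  shows "card {b \<in> C. card b = \<delta> \<and> T' \<subseteq> b} = card {b \<in> C. card b = \<delta> \<and> T \<subseteq> b}"
proof -
  let ?S = "\<lambda>X. {c \<in> C. hdist X c = \<delta> - card T}"
  have "T \<in> code_layer M C (card T)"
    using small_set_in_code_layer[OF assms(2,5)] .
  moreover have "T' \<in> code_layer M C (card T)"
    using small_set_in_code_layer[of T'] assms(3-5) by simp
  ultimately
  obtain g where "g \<in> code_aut M C" "g T = T'"
    using completely_transitiveD[OF assms(1) finite_M] by blast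
  then have "card (?S T') = card (?S T)"
    using card_sphere_code_aut by blast
  moreover have "{} \<in> ?S T' \<longleftrightarrow> {} \<in> ?S T"
    using assms(4) by simp
  moreover have "finite (?S X)" for X
    using finite_code by simp
  ultimately have "card (?S T' - {{}}) = card (?S T - {{}})"
    by (simp only: card_Diff_singleton_if)
  then show ?thesis
    using assms by (simp add: blocks_through_eq_sphere)
qed

lemma two_card_Int_le_min_distance:
  assumes "b \<in> C" "b' \<in> C" "b \<noteq> b'" "card b = \<delta>" "card b' = \<delta>"
  shows "2 * card (b \<inter> b') \<le> \<delta>"
proof -
  have "card (b \<inter> b') \<le> card b"
    using finite_codeword[OF assms(1)] by (simp add: card_mono)
  then show ?thesis
    using min_distance_le_hdist[OF assms(1-3)] assms(4,5)
      hdist_eq_card_Int[OF finite_codeword finite_codeword, OF assms(1,2)] by linarith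
qed

lemma card_blocks_through_le:
  assumes "T \<subseteq> M" "\<delta> \<le> 2 * card T + 1"
  shows "(\<delta> - card T) * card {b \<in> C. card b = \<delta> \<and> T \<subseteq> b} \<le> card M - card T"
proof -
  define B where "B = {b \<in> C. card b = \<delta> \<and> T \<subseteq> b}"
  have "finite T" using finite_vertex[OF assms(1)] .
  have "finite B" using finite_code unfolding B_def by simp
  have "b \<inter> b' = T" if "b \<in> B" "b' \<in> B" "b \<noteq> b'" for b b'
  proof -
    have "2 * card (b \<inter> b') \<le> \<delta>" "T \<subseteq> b \<inter> b'" "finite (b \<inter> b')"
      using that two_card_Int_le_min_distance finite_codeword unfolding B_def by auto
    moreover from this have "card (b \<inter> b') \<le> card T"
      using assms(2) by linarith
    ultimately show ?thesis
      using card_seteq by blast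
  qed
  then have "card (\<Union>b\<in>B. b - T) = (\<Sum>b\<in>B. card (b - T))"
    using \<open>finite B\<close> finite_codeword unfolding B_def by (intro card_UN_disjoint) auto
  also have "\<dots> = (\<delta> - card T) * card B"
    using \<open>finite T\<close> unfolding B_def by (simp add: card_Diff_subset)
  finally have "(\<delta> - card T) * card B = card (\<Union>b\<in>B. b - T)" ..
  also have "\<dots> \<le> card (M - T)"
    using code_subset finite_M unfolding B_def by (intro card_mono) auto
  also have "\<dots> = card M - card T"
    using assms(1) \<open>finite T\<close> by (simp add: card_Diff_subset)
  finally show ?thesis unfolding B_def .
qed

lemma design_of_min_weight_codewords:
  assumes "completely_transitive M C" "2 * t \<le> \<delta>" "\<delta> \<le> 2 * t + 1"
  shows "\<exists>lam. is_design M t \<delta> lam {c \<in> C. card c = \<delta>} \<and>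
           real lam \<le> (real (card M) - real t) / real (\<delta> - t)"
proof -
  have "t \<le> card M"
    using min_distance_le_card assms(2) by linarith
  then obtain T where T: "T \<subseteq> M" "card T = t"
    by (rule obtain_subset_with_card_n)
  define lam where "lam = card {b \<in> C. card b = \<delta> \<and> T \<subseteq> b}"
  have "card {b \<in> {c \<in> C. card c = \<delta>}. T' \<subseteq> b} = lam" if "T' \<subseteq> M" "card T' = t" for T'
  proof -
    have "card {b \<in> {c \<in> C. card c = \<delta>}. T' \<subseteq> b} = card {b \<in> C. card b = \<delta> \<and> T' \<subseteq> b}"
      by (rule arg_cong[where f = card]) auto
    also have "\<dots> = lam"
      unfolding lam_def using card_blocks_through_invariant[OF assms(1) T(1) that(1)] that T assms(2)
      by simp
    finally show ?thesis .
  qed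
  then have "is_design M t \<delta> lam {c \<in> C. card c = \<delta>}"
    unfolding is_design_def using code_subset by auto
  moreover have "real lam \<le> (real (card M) - real t) / real (\<delta> - t)"
  proof -
    have "(\<delta> - t) * lam \<le> card M - t"
      using card_blocks_through_le T assms(3) unfolding lam_def by blast
    then have "real (\<delta> - t) * real lam \<le> real (card M) - real t"
      using \<open>t \<le> card M\<close> by (metis of_nat_diff of_nat_le_iff of_nat_mult)
    moreover have "0 < \<delta> - t"
      using min_distance_pos assms(2) by linarith
    ultimately show ?thesis
      by (simp add: pos_le_divide_eq mult.commute)
  qed
  ultimately show ?thesis by blast
qed

end

theorem lemma2p11:
  fixes M :: "'a set" and C :: "'a set set" and \<delta> :: nat
  assumes "finite M"
    and "C \<subseteq> Pow M"
    and "completely_transitive M C"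
    and "{} \<in> C"
    and "has_min_distance C \<delta>"
    and "\<delta> \<in> {5, 6}"
  shows "\<exists>lam :: nat.
           (\<delta> = 5 \<and> is_design M 2 \<delta> lam {c \<in> C. card c = \<delta>}
              \<and> real lam \<le> (real (card M) - 2) / 3) \<or>
           (\<delta> = 6 \<and> is_design M 3 \<delta> lam {c \<in> C. card c = \<delta>}
              \<and> real lam \<le> (real (card M) - 3) / 3)"
proof -
  interpret code_with_zero M C \<delta>
    using assms by unfold_locales
  consider "\<delta> = 5" | "\<delta> = 6"
    using assms(6) by blast
  then show ?thesis
  proof cases
    case 1
    then have "2 * 2 \<le> \<delta>" "\<delta> \<le> 2 * 2 + 1" "real (\<delta> - 2) = 3" by simp_all
    then show ?thesis
      using 1 design_of_min_weight_codewords[OF assms(3), of 2] by auto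
  next
    case 2
    then have "2 * 3 \<le> \<delta>" "\<delta> \<le> 2 * 3 + 1" "real (\<delta> - 3) = 3" by simp_all
    then show ?thesis
      using 2 design_of_min_weight_codewords[OF assms(3), of 3] by auto
  qed
qed

end
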